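(* Let $\mathcal H_C$ be a finite-dimensional Hilbert space and let $\{\sigma^{(\mathrm{target})}_{b|x}\}_{b,x\in\{0,1\}}$ be any bipartite assemblage on $\mathcal H_C$. Define the tripartite family $$\sigma^{(\mathrm{initial})}_{a,b|x,y}:=\tfrac12\,\sigma^{(\mathrm{target})}_{b|x\oplus a\oplus y},\qquad a,b,x,y\in\{0,1\}.$$ Likewise, let $P^{(\mathrm{target})}(b,c|x,z)$, with $b,x\in\{0,1\}$ and $c,z$ ranging over finite sets, be any bipartite Bell behavior, and define $$P^{(\mathrm{initial})}(a,b,c|x,y,z):=\tfrac12\,P^{(\mathrm{target})}(b,c|x\oplus a\oplus y,z).$$ Then: (i) applying the wiring $y=a$ yields the targets: $\sum_{a}\sigma^{(\mathrm{initial})}_{a,b|x,a}=\sigma^{(\mathrm{target})}_{b|x}$ and $\sum_a P^{(\mathrm{initial})}(a,b,c|x,a,z)=P^{(\mathrm{target})}(b,c|x,z)$ for all $b,c,x,z$; (ii) $\sigma^{(\mathrm{initial})}$ admits a local hidden-state (LHS) model across the bipartition $AB|C$, and $P^{(\mathrm{initial})}$ admits a local hidden-variable (LHV) model across the bipartition $AB|C$, for every choice of target.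
   Context: $\oplus$ denotes addition modulo 2. A bipartite assemblage $\{\sigma_{b|x}\}$ on $\mathcal H_C$ is a family of positive semidefinite operators on $\mathcal H_C$ such that $\sum_b\sigma_{b|x}$ is a density operator (trace one) independent of $x$. A bipartite Bell behavior $P(b,c|x,z)$ is a family of conditional probability distributions of outputs $(b,c)$ given inputs $(x,z)$ that is non-signaling: $\sum_c P(b,c|x,z)$ is independent of $z$ and $\sum_b P(b,c|x,z)$ is independent of $x$. A tripartite family $\{\sigma_{a,b|x,y}\}$ of positive semidefinite operators on $\mathcal H_C$ admits an LHS model across $AB|C$ if there exist a finite set of values $\lambda$, probabilities $P_\lambda\ge0$ summing to one, conditional probability distributions $P_{a,b|x,y,\lambda}$ (arbitrary, i.e. not required to be non-signaling between $a$ and $b$), and density operators $\varrho_\lambda$ on $\mathcal H_C$ such that $\sigma_{a,b|x,y}=\sum_\lambda P_\lambda P_{a,b|x,y,\lambda}\varrho_\lambda$ for all $a,b,x,y$. A tripartite distribution $P(a,b,c|x,y,z)$ admits an LHV model across $AB|C$ if there exist a finite set of $\lambda$, probabilities $P_\lambda$, arbitrary conditional distributions $P(a,b|x,y,\lambda)$ and conditional distributions $P(c|z,\lambda)$ with $P(a,b,c|x,y,z)=\sum_\lambda P_\lambda P(a,b|x,y,\lambda)P(c|z,\lambda)$. *)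

theory Defs
  imports Complex_Main "HOL-Library.Function_Algebras"
begin

type_synonym 'n op = "'n \<Rightarrow> 'n \<Rightarrow> complex"

definition op_scale :: "complex \<Rightarrow> 'n op \<Rightarrow> 'n op" where
  "op_scale c M = (\<lambda>i j. c * M i j)"

definition op_trace :: "('n::finite) op \<Rightarrow> complex" where
  "op_trace M = (\<Sum>i\<in>UNIV. M i i)"

definition psd :: "('n::finite) op \<Rightarrow> bool" where
  "psd M \<longleftrightarrow> (\<forall>v::'n \<Rightarrow> complex.
      Im (\<Sum>i\<in>UNIV. \<Sum>j\<in>UNIV. cnj (v i) * M i j * v j) = 0 \<and>
      Re (\<Sum>i\<in>UNIV. \<Sum>j\<in>UNIV. cnj (v i) * M i j * v j) \<ge> 0)"

definition density :: "('n::finite) op \<Rightarrow> bool" where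
  "density M \<longleftrightarrow> psd M \<and> op_trace M = 1"

text \<open>Addition modulo 2 on bits, bits represented as bool (False = 0, True = 1).\<close>
definition xor2 :: "bool \<Rightarrow> bool \<Rightarrow> bool" (infixl "\<oplus>\<^sub>2" 65) where
  "p \<oplus>\<^sub>2 q \<longleftrightarrow> p \<noteq> q"

definition assemblage :: "(bool \<Rightarrow> bool \<Rightarrow> ('n::finite) op) \<Rightarrow> bool" where
  "assemblage \<sigma> \<longleftrightarrow> (\<forall>b x. psd (\<sigma> b x)) \<and>
     (\<forall>x. density (\<Sum>b\<in>UNIV. \<sigma> b x)) \<and>
     (\<forall>x x'. (\<Sum>b\<in>UNIV. \<sigma> b x) = (\<Sum>b\<in>UNIV. \<sigma> b x'))"

definition bell_behavior :: "(bool \<Rightarrow> 'c::finite \<Rightarrow> bool \<Rightarrow> 'z::finite \<Rightarrow> real) \<Rightarrow> bool" where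
  "bell_behavior P \<longleftrightarrow> (\<forall>b c x z. P b c x z \<ge> 0) \<and>
     (\<forall>x z. (\<Sum>b\<in>UNIV. \<Sum>c\<in>UNIV. P b c x z) = 1) \<and>
     (\<forall>b x z z'. (\<Sum>c\<in>UNIV. P b c x z) = (\<Sum>c\<in>UNIV. P b c x z')) \<and>
     (\<forall>c x x' z. (\<Sum>b\<in>UNIV. P b c x z) = (\<Sum>b\<in>UNIV. P b c x' z))"

definition initial_assemblage ::
  "(bool \<Rightarrow> bool \<Rightarrow> 'n op) \<Rightarrow> bool \<Rightarrow> bool \<Rightarrow> bool \<Rightarrow> bool \<Rightarrow> 'n op" where
  "initial_assemblage \<sigma> a b x y = op_scale (1/2) (\<sigma> b (x \<oplus>\<^sub>2 a \<oplus>\<^sub>2 y))"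

definition initial_behavior ::
  "(bool \<Rightarrow> 'c \<Rightarrow> bool \<Rightarrow> 'z \<Rightarrow> real) \<Rightarrow> bool \<Rightarrow> bool \<Rightarrow> 'c \<Rightarrow> bool \<Rightarrow> bool \<Rightarrow> 'z \<Rightarrow> real" where
  "initial_behavior P a b c x y z = (1/2) * P b c (x \<oplus>\<^sub>2 a \<oplus>\<^sub>2 y) z"

definition has_LHS_AB_C :: "(bool \<Rightarrow> bool \<Rightarrow> bool \<Rightarrow> bool \<Rightarrow> ('n::finite) op) \<Rightarrow> bool" where
  "has_LHS_AB_C \<sigma> \<longleftrightarrow> (\<exists>(L::nat set) (p::nat \<Rightarrow> real)
        (Pab::nat \<Rightarrow> bool \<Rightarrow> bool \<Rightarrow> bool \<Rightarrow> bool \<Rightarrow> real) (\<rho>::nat \<Rightarrow> 'n op).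
      finite L \<and> (\<forall>l\<in>L. p l \<ge> 0) \<and> (\<Sum>l\<in>L. p l) = 1 \<and>
      (\<forall>l\<in>L. \<forall>a b x y. Pab l a b x y \<ge> 0) \<and>
      (\<forall>l\<in>L. \<forall>x y. (\<Sum>a\<in>UNIV. \<Sum>b\<in>UNIV. Pab l a b x y) = 1) \<and>
      (\<forall>l\<in>L. density (\<rho> l)) \<and>
      (\<forall>a b x y. \<sigma> a b x y =
          (\<Sum>l\<in>L. op_scale (complex_of_real (p l * Pab l a b x y)) (\<rho> l))))"

definition has_LHV_AB_C ::
  "(bool \<Rightarrow> bool \<Rightarrow> 'c::finite \<Rightarrow> bool \<Rightarrow> bool \<Rightarrow> 'z::finite \<Rightarrow> real) \<Rightarrow> bool" where
  "has_LHV_AB_C P \<longleftrightarrow> (\<exists>(L::nat set) (p::nat \<Rightarrow> real)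
        (Pab::nat \<Rightarrow> bool \<Rightarrow> bool \<Rightarrow> bool \<Rightarrow> bool \<Rightarrow> real) (Pc::nat \<Rightarrow> 'c \<Rightarrow> 'z \<Rightarrow> real).
      finite L \<and> (\<forall>l\<in>L. p l \<ge> 0) \<and> (\<Sum>l\<in>L. p l) = 1 \<and>
      (\<forall>l\<in>L. \<forall>a b x y. Pab l a b x y \<ge> 0) \<and>
      (\<forall>l\<in>L. \<forall>x y. (\<Sum>a\<in>UNIV. \<Sum>b\<in>UNIV. Pab l a b x y) = 1) \<and>
      (\<forall>l\<in>L. \<forall>c z. Pc l c z \<ge> 0) \<and>
      (\<forall>l\<in>L. \<forall>z. (\<Sum>c\<in>UNIV. Pc l c z) = 1) \<and>
      (\<forall>a b c x y z. P a b c x y z = (\<Sum>l\<in>L. p l * Pab l a b x y * Pc l c z)))"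

end

theory Submission
  imports Defs "HOL-Library.Countable_Set"
begin

text \<open>Take as hidden variable a pair (b', x') of bits, drawn with probability tr \<sigma>(b'|x') / 2,
  and give C the normalised state \<sigma>(b'|x') / tr \<sigma>(b'|x'). AB answer deterministically: b = b'
  and a is the unique bit with x \<oplus> a \<oplus> y = x'. For given a, b, x, y exactly one hidden variable
  is compatible, so the mixture is \<sigma>(b|x \<oplus> a \<oplus> y) / 2; the weights sum to one because for
  each x' the traces of \<sigma>(b|x') add up to 1. Normalised conditional distributions of c in place
  of normalised states give the LHV model, and the wiring y = a turns x \<oplus> a \<oplus> y into x.\<close>

definition quad_form :: "('n::finite) op \<Rightarrow> ('n \<Rightarrow> complex) \<Rightarrow> complex" where
  "quad_form M v = (\<Sum>i\<in>UNIV. \<Sum>j\<in>UNIV. cnj (v i) * M i j * v j)"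

lemma psd_iff_quad_form: "psd M \<longleftrightarrow> (\<forall>v. Im (quad_form M v) = 0 \<and> Re (quad_form M v) \<ge> 0)"
  unfolding psd_def quad_form_def ..

lemma quad_form_restrict:
  assumes "\<And>i j. i \<notin> S \<or> j \<notin> S \<Longrightarrow> cnj (v i) * M i j * v j = 0"
  shows "quad_form M v = (\<Sum>i\<in>S. \<Sum>j\<in>S. cnj (v i) * M i j * v j)"
proof -
  have "(\<Sum>j\<in>UNIV. cnj (v i) * M i j * v j) = (\<Sum>j\<in>S. cnj (v i) * M i j * v j)" for i
    by (rule sum.mono_neutral_right) (auto simp: assms)
  moreover have "(\<Sum>i\<in>UNIV. \<Sum>j\<in>S. cnj (v i) * M i j * v j)
      = (\<Sum>i\<in>S. \<Sum>j\<in>S. cnj (v i) * M i j * v j)"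
    by (rule sum.mono_neutral_right) (auto simp: assms sum.neutral)
  ultimately show ?thesis
    by (simp add: quad_form_def)
qed

lemma quad_form_unit: "quad_form M (\<lambda>k. if k = i then 1 else 0) = M i i"
  by (subst quad_form_restrict[where S = "{i}"]) auto

lemma quad_form_two_point:
  assumes "i \<noteq> j"
  shows "quad_form M (\<lambda>k. if k = i then 1 else if k = j then t else 0)
    = M i i + t * M i j + cnj t * M j i + cnj t * t * M j j"
  using assms by (subst quad_form_restrict[where S = "{i, j}"]) (auto simp: algebra_simps)

lemma quad_form_scale: "quad_form (op_scale c M) v = c * quad_form M v"
  unfolding quad_form_def op_scale_def by (simp add: sum_distrib_left algebra_simps)

lemma psd_diag: "psd M \<Longrightarrow> Im (M i i) = 0 \<and> Re (M i i) \<ge> 0"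
  by (metis psd_iff_quad_form quad_form_unit)

lemma psd_scale: "psd M \<Longrightarrow> c \<ge> 0 \<Longrightarrow> psd (op_scale (complex_of_real c) M)"
  by (simp add: psd_iff_quad_form quad_form_scale)

lemma psd_offdiag_eq_0:
  assumes "psd M" and "M i i = 0" and "M j j = 0"
  shows "M i j = 0"
proof (cases "i = j")
  case True
  with assms(2) show ?thesis by simp
next
  case False
  define w where "w t = t * M i j + cnj t * M j i" for t
  have w_nonneg: "Im (w t) = 0 \<and> Re (w t) \<ge> 0" for t
    using assms(1) quad_form_two_point[OF False, of M t]
    unfolding psd_iff_quad_form assms(2,3) w_def by (metis add_0 add.right_neutral mult_zero_right)
  have w_zero: "w t = 0" for t
    \<comment> \<open>w is odd in t, so both w t and - w t have nonnegative real part\<close>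
    using w_nonneg[of t] w_nonneg[of "- t"] by (simp add: w_def complex_eq_iff)
  have "2 * \<i> * M i j = \<i> * w 1 + w \<i>"
    by (simp add: w_def algebra_simps)
  then show ?thesis by (simp add: w_zero)
qed

lemma op_trace_scale: "op_trace (op_scale c M) = c * op_trace M"
  unfolding op_trace_def op_scale_def by (simp add: sum_distrib_left)

lemma op_trace_sum: "op_trace (\<Sum>b\<in>B. M b) = (\<Sum>b\<in>B. op_trace (M b))"
proof (induction B rule: infinite_finite_induct)
  case (insert b B)
  then show ?case by (simp add: op_trace_def sum.distrib)
qed (simp_all add: op_trace_def)

lemma psd_op_trace_real_nonneg:
  assumes "psd M"
  shows "op_trace M = complex_of_real (Re (op_trace M))" and "Re (op_trace M) \<ge> 0"
  using psd_diag[OF assms] unfolding op_trace_def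
  by (auto simp: complex_eq_iff intro: sum_nonneg)

lemma psd_eq_0_if_op_trace_eq_0:
  assumes "psd M" and "op_trace M = 0"
  shows "M = 0"
proof -
  have "Re (op_trace M) = 0"
    using assms(2) by simp
  then have "(\<Sum>k\<in>UNIV. Re (M k k)) = 0"
    unfolding op_trace_def by simp
  then have "Re (M k k) = 0" for k
    using psd_diag[OF assms(1)] by (simp add: sum_nonneg_eq_0_iff)
  then have diag: "M k k = 0" for k
    using psd_diag[OF assms(1)] by (simp add: complex_eq_iff)
  show ?thesis
    using psd_offdiag_eq_0[OF assms(1) diag diag] by (simp add: fun_eq_iff)
qed

lemma ex_density: "\<exists>\<rho>::('n::finite) op. density \<rho>"
proof -
  fix k :: 'n
  define \<rho> :: "'n op" where "\<rho> i j = (if i = k \<and> j = k then 1 else 0)" for i j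
  have "quad_form \<rho> v = cnj (v k) * v k" for v
    by (subst quad_form_restrict[where S = "{k}"]) (auto simp: \<rho>_def)
  then have "psd \<rho>"
    unfolding psd_iff_quad_form by simp
  moreover have "op_trace \<rho> = 1"
    unfolding op_trace_def \<rho>_def by simp
  ultimately show ?thesis
    unfolding density_def by blast
qed

lemma psd_eq_scale_density:
  assumes "psd M"
  shows "\<exists>\<rho>. density \<rho> \<and> M = op_scale (op_trace M) \<rho>"
proof (cases "op_trace M = 0")
  case True
  obtain \<rho> :: "'a op" where "density \<rho>"
    using ex_density by blast
  with True show ?thesis
    using psd_eq_0_if_op_trace_eq_0[OF assms] by (auto simp: op_scale_def fun_eq_iff)
next
  case False
  define t where "t = Re (op_trace M)"
  have t: "op_trace M = complex_of_real t"
    unfolding t_def by (rule psd_op_trace_real_nonneg(1)[OF assms])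
  with False have "t \<noteq> 0"
    by auto
  with psd_op_trace_real_nonneg(2)[OF assms] have "t > 0"
    unfolding t_def by linarith
  define \<rho> where "\<rho> = op_scale (complex_of_real (1 / t)) M"
  have "density \<rho>"
    using psd_scale[OF assms, of "1 / t"] t \<open>t > 0\<close>
    by (simp add: density_def \<rho>_def op_trace_scale)
  moreover have "M = op_scale (op_trace M) \<rho>"
    using t \<open>t > 0\<close> by (simp add: \<rho>_def op_scale_def fun_eq_iff)
  ultimately show ?thesis
    by blast
qed

lemma nonneg_eq_scale_distribution:
  fixes f :: "'c::finite \<Rightarrow> 'z \<Rightarrow> real"
  assumes "\<And>c z. f c z \<ge> 0" and "\<And>z. (\<Sum>c\<in>UNIV. f c z) = m"
  shows "\<exists>q. (\<forall>c z. q c z \<ge> 0) \<and> (\<forall>z. (\<Sum>c\<in>UNIV. q c z) = 1)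
    \<and> (\<forall>c z. f c z = m * q c z)"
proof (cases "m = 0")
  case True
  then have "f c z = 0" for c z
    using assms by (simp add: sum_nonneg_eq_0_iff)
  with True show ?thesis
    by (intro exI[of _ "\<lambda>c z. 1 / real (card (UNIV :: 'c set))"]) simp
next
  case False
  moreover have "m \<ge> 0"
    using assms sum_nonneg by metis
  ultimately show ?thesis
    using assms by (intro exI[of _ "\<lambda>c z. f c z / m"]) (simp add: sum_divide_distrib[symmetric])
qed

definition xor_response :: "bool \<times> bool \<Rightarrow> bool \<Rightarrow> bool \<Rightarrow> bool \<Rightarrow> bool \<Rightarrow> real" where
  "xor_response h a b x y = (if h = (b, x \<oplus>\<^sub>2 a \<oplus>\<^sub>2 y) then 1 else 0)"

lemma xor_response_nonneg: "xor_response h a b x y \<ge> 0"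
  by (simp add: xor_response_def)

lemma sum_xor_response: "(\<Sum>a\<in>UNIV. \<Sum>b\<in>UNIV. xor_response h a b x y) = 1"
  by (cases h) (auto simp: xor_response_def xor2_def UNIV_bool)

lemma sum_xor_response_sift:
  fixes G :: "bool \<times> bool \<Rightarrow> real \<Rightarrow> 'a::comm_monoid_add"
  assumes "\<And>h. G h 0 = 0"
  shows "(\<Sum>h\<in>UNIV. G h (xor_response h a b x y)) = G (b, x \<oplus>\<^sub>2 a \<oplus>\<^sub>2 y) 1"
proof -
  have "G h (xor_response h a b x y) = (if h = (b, x \<oplus>\<^sub>2 a \<oplus>\<^sub>2 y) then G h 1 else 0)" for h
    by (simp add: xor_response_def assms)
  then show ?thesis
    by simp
qed

lemma has_LHS_AB_CI:
  fixes L :: "'l set" and \<sigma> :: "bool \<Rightarrow> bool \<Rightarrow> bool \<Rightarrow> bool \<Rightarrow> ('n::finite) op"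
  assumes "finite L" and "\<forall>l\<in>L. p l \<ge> 0" and "(\<Sum>l\<in>L. p l) = 1"
    and "\<forall>l\<in>L. \<forall>a b x y. Pab l a b x y \<ge> 0"
    and "\<forall>l\<in>L. \<forall>x y. (\<Sum>a\<in>UNIV. \<Sum>b\<in>UNIV. Pab l a b x y) = 1"
    and "\<forall>l\<in>L. density (\<rho> l)"
    and "\<forall>a b x y. \<sigma> a b x y = (\<Sum>l\<in>L. op_scale (complex_of_real (p l * Pab l a b x y)) (\<rho> l))"
  shows "has_LHS_AB_C \<sigma>"
proof -
  have "countable L"
    using assms(1) by (rule countable_finite)
  let ?d = "from_nat_into L"
  show ?thesis
    unfolding has_LHS_AB_C_def
    apply (rule exI[of _ "to_nat_on L ` L"], rule exI[of _ "p \<circ> ?d"],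
        rule exI[of _ "Pab \<circ> ?d"], rule exI[of _ "\<rho> \<circ> ?d"])
    using assms \<open>countable L\<close> by (simp add: sum.reindex inj_on_to_nat_on)
qed

lemma has_LHV_AB_CI:
  fixes L :: "'l set" and P :: "bool \<Rightarrow> bool \<Rightarrow> 'c::finite \<Rightarrow> bool \<Rightarrow> bool \<Rightarrow> 'z::finite \<Rightarrow> real"
  assumes "finite L" and "\<forall>l\<in>L. p l \<ge> 0" and "(\<Sum>l\<in>L. p l) = 1"
    and "\<forall>l\<in>L. \<forall>a b x y. Pab l a b x y \<ge> 0"
    and "\<forall>l\<in>L. \<forall>x y. (\<Sum>a\<in>UNIV. \<Sum>b\<in>UNIV. Pab l a b x y) = 1"
    and "\<forall>l\<in>L. \<forall>c z. Pc l c z \<ge> 0"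
    and "\<forall>l\<in>L. \<forall>z. (\<Sum>c\<in>UNIV. Pc l c z) = 1"
    and "\<forall>a b c x y z. P a b c x y z = (\<Sum>l\<in>L. p l * Pab l a b x y * Pc l c z)"
  shows "has_LHV_AB_C P"
proof -
  have "countable L"
    using assms(1) by (rule countable_finite)
  let ?d = "from_nat_into L"
  show ?thesis
    unfolding has_LHV_AB_C_def
    apply (rule exI[of _ "to_nat_on L ` L"], rule exI[of _ "p \<circ> ?d"],
        rule exI[of _ "Pab \<circ> ?d"], rule exI[of _ "Pc \<circ> ?d"])
    using assms \<open>countable L\<close> by (simp add: sum.reindex inj_on_to_nat_on)
qed

lemma sum_half_weights_eq_1:
  fixes w :: "bool \<Rightarrow> bool \<Rightarrow> real"
  assumes "\<And>x. w False x + w True x = 1"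
  shows "(\<Sum>(b, x)\<in>UNIV. w b x / 2) = 1"
  using assms[of False] assms[of True]
  by (simp add: UNIV_Times_UNIV[symmetric] sum.cartesian_product[symmetric] UNIV_bool
      del: UNIV_Times_UNIV)

lemma has_LHS_AB_C_initial_assemblage:
  fixes \<sigma> :: "bool \<Rightarrow> bool \<Rightarrow> ('n::finite) op"
  assumes "assemblage \<sigma>"
  shows "has_LHS_AB_C (initial_assemblage \<sigma>)"
proof -
  have psd: "psd (\<sigma> b x)" for b x
    using assms unfolding assemblage_def by blast
  define w where "w b x = Re (op_trace (\<sigma> b x))" for b x
  have trace_w: "op_trace (\<sigma> b x) = complex_of_real (w b x)" and w_nonneg: "w b x \<ge> 0" for b x
    using psd_op_trace_real_nonneg[OF psd] unfolding w_def by blast+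
  have w_sum: "w False x + w True x = 1" for x
  proof -
    have "op_trace (\<Sum>b\<in>UNIV. \<sigma> b x) = 1"
      using assms unfolding assemblage_def density_def by blast
    then show ?thesis
      unfolding op_trace_sum by (simp add: UNIV_bool trace_w flip: of_real_add)
  qed
  have "\<forall>h. \<exists>\<rho>. density \<rho> \<and> \<sigma> (fst h) (snd h) = op_scale (op_trace (\<sigma> (fst h) (snd h))) \<rho>"
    using psd_eq_scale_density[OF psd] by blast
  then obtain \<rho> where \<rho>: "\<And>h. density (\<rho> h)"
    and \<sigma>_eq: "\<And>b x. \<sigma> b x = op_scale (complex_of_real (w b x)) (\<rho> (b, x))"
    unfolding choice_iff trace_w by auto
  define p where "p = (\<lambda>(b, x). w b x / 2)"
  have initial_eq: "initial_assemblage \<sigma> a b x y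
      = (\<Sum>h\<in>UNIV. op_scale (complex_of_real (p h * xor_response h a b x y)) (\<rho> h))" for a b x y
    by (subst sum_xor_response_sift[where G = "\<lambda>h r. op_scale (complex_of_real (p h * r)) (\<rho> h)"])
      (simp_all add: initial_assemblage_def op_scale_def fun_eq_iff p_def \<sigma>_eq)
  show ?thesis
    using initial_eq
    by (intro has_LHS_AB_CI[where L = UNIV and p = p and Pab = xor_response and \<rho> = \<rho>])
      (simp_all add: p_def w_nonneg sum_half_weights_eq_1 w_sum xor_response_nonneg sum_xor_response \<rho>)
qed

lemma has_LHV_AB_C_initial_behavior:
  fixes P :: "bool \<Rightarrow> 'c::finite \<Rightarrow> bool \<Rightarrow> 'z::finite \<Rightarrow> real"
  assumes "bell_behavior P"
  shows "has_LHV_AB_C (initial_behavior P)"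
proof -
  have P_nonneg: "P b c x z \<ge> 0" for b c x z
    using assms unfolding bell_behavior_def by blast
  \<comment> \<open>By no-signalling the choice of z in the marginal is irrelevant.\<close>
  define w where "w b x = (\<Sum>c\<in>UNIV. P b c x undefined)" for b x
  have marginal: "(\<Sum>c\<in>UNIV. P b c x z) = w b x" for b x z
    using assms unfolding bell_behavior_def w_def by metis
  have w_nonneg: "w b x \<ge> 0" for b x
    by (simp add: w_def P_nonneg sum_nonneg)
  have w_sum: "w False x + w True x = 1" for x
    using assms unfolding bell_behavior_def w_def by (simp add: UNIV_bool)
  have "\<exists>q. (\<forall>c z. q c z \<ge> 0) \<and> (\<forall>z. (\<Sum>c\<in>UNIV. q c z) = 1)
      \<and> (\<forall>c z. P b c x z = w b x * q c z)" for b x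
    using nonneg_eq_scale_distribution[of "\<lambda>c z. P b c x z" "w b x"] P_nonneg marginal by blast
  then have "\<forall>h. \<exists>q. (\<forall>c z. q c z \<ge> 0) \<and> (\<forall>z. (\<Sum>c\<in>UNIV. q c z) = 1)
      \<and> (\<forall>c z. P (fst h) c (snd h) z = w (fst h) (snd h) * q c z)"
    by blast
  then obtain Pc where Pc: "\<And>h c z. Pc h c z \<ge> 0" "\<And>h z. (\<Sum>c\<in>UNIV. Pc h c z) = 1"
    and P_eq: "\<And>b c x z. P b c x z = w b x * Pc (b, x) c z"
    unfolding choice_iff by (metis fst_conv snd_conv)
  define p where "p = (\<lambda>(b, x). w b x / 2)"
  have initial_eq: "initial_behavior P a b c x y z
      = (\<Sum>h\<in>UNIV. p h * xor_response h a b x y * Pc h c z)"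
    for a b c x y z
    by (subst sum_xor_response_sift[where G = "\<lambda>h r. p h * r * Pc h c z"])
      (simp_all add: initial_behavior_def p_def P_eq)
  show ?thesis
    using initial_eq
    by (intro has_LHV_AB_CI[where L = UNIV and p = p and Pab = xor_response and Pc = Pc])
      (simp_all add: p_def w_nonneg sum_half_weights_eq_1 w_sum xor_response_nonneg sum_xor_response Pc)
qed

lemma sum_initial_assemblage_wired: "(\<Sum>a\<in>UNIV. initial_assemblage \<sigma> a b x a) = \<sigma> b x"
  by (simp add: UNIV_bool initial_assemblage_def xor2_def op_scale_def fun_eq_iff)

lemma sum_initial_behavior_wired: "(\<Sum>a\<in>UNIV. initial_behavior P a b c x a z) = P b c x z"
  by (simp add: UNIV_bool initial_behavior_def xor2_def)

theorem theorem1: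
  fixes \<sigma> :: "bool \<Rightarrow> bool \<Rightarrow> ('n::finite) op"
    and P :: "bool \<Rightarrow> 'c::finite \<Rightarrow> bool \<Rightarrow> 'z::finite \<Rightarrow> real"
  assumes "assemblage \<sigma>"
    and "bell_behavior P"
  shows "(\<forall>b x. (\<Sum>a\<in>UNIV. initial_assemblage \<sigma> a b x a) = \<sigma> b x)
       \<and> (\<forall>b c x z. (\<Sum>a\<in>UNIV. initial_behavior P a b c x a z) = P b c x z)
       \<and> has_LHS_AB_C (initial_assemblage \<sigma>)
       \<and> has_LHV_AB_C (initial_behavior P)"
  by (intro conjI allI sum_initial_assemblage_wired sum_initial_behavior_wired
      has_LHS_AB_C_initial_assemblage[OF assms(1)] has_LHV_AB_C_initial_behavior[OF assms(2)])

end
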